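(* Let $m$ be an integer with $m \equiv 3 \pmod 4$ and $m \ge 3$, and let $n = 3^m - 1$. Then: (i) the ternary cyclic code $\mathcal{C}_{(0,3,m)}$ has length $n$ and dimension $n/2$, and the ternary cyclic code $\mathcal{C}_{(1,2,m)}$ has length $n$ and dimension $(n+2)/2$; (ii) the ternary cyclic code $\mathcal{C}_{(2,3,m)}$ has length $n$ and dimension $n/2$, and the ternary cyclic code $\mathcal{C}_{(0,1,m)}$ has length $n$ and dimension $(n+2)/2$.
   Context: Let $m \ge 2$ be an integer, $n = 3^m-1$, and let $\alpha$ be a primitive element of $\mathbb{F}_{3^m}$. For an integer $0 \le j \le n-1$ with $3$-adic expansion $j = \sum_{t=0}^{m-1} j_t 3^t$, $j_t \in \{0,1,2\}$, let $w_3(j) = \sum_{t=0}^{m-1} j_t$ (the $3$-weight of $j$). For distinct $i_1, i_2 \in \{0,1,2,3\}$ let $T_{(i_1,i_2,m)} = \{1 \le j \le n-1 : w_3(j) \equiv i_1 \text{ or } i_2 \pmod 4\}$ and $g_{(i_1,i_2,m)}(x) = \prod_{j \in T_{(i_1,i_2,m)}} (x - \alpha^j)$, which lies in $\mathbb{F}_3[x]$. $\mathcal{C}_{(i_1,i_2,m)}$ denotes the ternary cyclic code of length $n$ with generator polynomial $g_{(i_1,i_2,m)}(x)$, i.e. the ideal generated by $g_{(i_1,i_2,m)}(x)$ in $\mathbb{F}_3[x]/(x^n-1)$. *)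

theory Defs
  imports "HOL-Computational_Algebra.Polynomial"
begin

definition w3 :: "nat \<Rightarrow> nat \<Rightarrow> nat" where
  "w3 m j = (\<Sum>t<m. (j div 3 ^ t) mod 3)"

definition T_set :: "nat \<Rightarrow> nat \<Rightarrow> nat \<Rightarrow> nat set" where
  "T_set i1 i2 m = {j. 1 \<le> j \<and> j \<le> (3 ^ m - 1) - 1 \<and>
                       (w3 m j mod 4 = i1 \<or> w3 m j mod 4 = i2)}"

definition primitive_element :: "'a::field \<Rightarrow> bool" where
  "primitive_element \<alpha> \<longleftrightarrow> (\<forall>x. x \<noteq> 0 \<longrightarrow> (\<exists>j. x = \<alpha> ^ j))"

definition gen_poly :: "'a::field \<Rightarrow> nat \<Rightarrow> nat \<Rightarrow> nat \<Rightarrow> 'a poly" where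
  "gen_poly \<alpha> i1 i2 m = (\<Prod>j\<in>T_set i1 i2 m. [:- (\<alpha> ^ j), 1:])"

(* the prime subfield F_3 inside a field of characteristic 3 is the image of of_nat;
   a polynomial lies in F_3[x] iff all its coefficients lie there *)
definition prime_subfield_poly :: "'a::field poly \<Rightarrow> bool" where
  "prime_subfield_poly p \<longleftrightarrow> (\<forall>i. coeff p i \<in> range of_nat)"

(* The cyclic code of length n generated by g: the ideal (g) in F_3[x]/(x^n - 1),
   elements represented by their canonical representatives of degree < n. *)
definition cyclic_code :: "nat \<Rightarrow> 'a::field poly \<Rightarrow> 'a poly set" where
  "cyclic_code n g = {c. prime_subfield_poly c \<and>
      (\<exists>q. prime_subfield_poly q \<and> c = (q * g) mod (monom 1 n - 1))}"

(* A ternary linear code C has length n (codewords are residues mod x^n - 1, i.e.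
   polynomials of degree < n) and dimension k, i.e. |C| = 3^k. *)
definition ternary_code_params :: "'a::field poly set \<Rightarrow> nat \<Rightarrow> nat \<Rightarrow> bool" where
  "ternary_code_params C n k \<longleftrightarrow>
     (\<forall>c\<in>C. c = 0 \<or> degree c < n) \<and> finite C \<and> card C = 3 ^ k"

end

theory Submission
  imports Defs "HOL-Number_Theory.Cong"
begin

text \<open>
  If g in F_3[x] divides x^n - 1, the cyclic code generated by g consists exactly of the
  products g r with r in F_3[x] and deg r < n - deg g, so it has dimension n - deg g.
  For g = prod_{j in T} (x - alpha^j), cubing the coefficients replaces each root alpha^j by
  alpha^(3j); modulo n, multiplication by 3 rotates the base-3 digits of j, which preserves the
  3-weight and therefore permutes T, so g is fixed by the Frobenius map and lies in F_3[x]. The number N_r of j < 3^m with w_3(j) = r (mod 4) satisfies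
  4 N_r = 3^m + (-1)^r + 2 Re(i^(m-r)), by the character sum over the fourth roots of unity.
  For m = 3 (mod 4) this gives N_0 = N_2 = N_3 = (3^m + 1)/4 and N_1 = (3^m - 3)/4, and T
  differs from the corresponding union of two classes only by j = 0 (weight 0) and j = n
  (weight 2m = 2 mod 4).
\<close>

lemma of_nat_power_CHAR:
  assumes "prime CHAR('a::comm_semiring_1)"
  shows "(of_nat k :: 'a) ^ CHAR('a) = of_nat k"
proof (induction k)
  case 0
  then show ?case using assms by (simp add: prime_gt_0_nat power_0_left)
next
  case (Suc k)
  then show ?case using assms by (simp add: freshmans_dream)
qed

lemma card_range_of_nat_CHAR:
  assumes "CHAR('a::semiring_1_cancel) > 0"
  shows "card (range (of_nat :: nat \<Rightarrow> 'a)) = CHAR('a)"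
proof -
  have "(of_nat k :: 'a) \<in> of_nat ` {..<CHAR('a)}" for k
    using assms by (intro image_eqI[of _ _ "k mod CHAR('a)"]) (auto simp: of_nat_eq_iff_cong_CHAR)
  then have "range (of_nat :: nat \<Rightarrow> 'a) = of_nat ` {..<CHAR('a)}"
    by auto
  moreover have "inj_on (of_nat :: nat \<Rightarrow> 'a) {..<CHAR('a)}"
    by (auto intro!: inj_onI simp: of_nat_eq_iff_cong_CHAR cong_def)
  ultimately show ?thesis
    by (simp add: card_image)
qed

text \<open>
  With p = CHAR('a), the p elements of the prime field already exhaust the at most p roots
  of x^p - x.
\<close>

lemma power_CHAR_eq_self_iff:
  fixes c :: "'a::idom"
  assumes "prime CHAR('a)"
  shows "c ^ CHAR('a) = c \<longleftrightarrow> c \<in> range of_nat"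
proof
  define f :: "'a poly" where "f = monom 1 CHAR('a) + [:0, -1:]"
  have deg: "degree f = CHAR('a)"
    using prime_gt_1_nat[OF assms] unfolding f_def
    by (subst degree_add_eq_left) (auto simp: degree_monom_eq)
  then have "f \<noteq> 0"
    using prime_gt_1_nat[OF assms] by auto
  have roots: "x \<in> {x. poly f x = 0} \<longleftrightarrow> x ^ CHAR('a) = x" for x
    by (simp add: f_def poly_monom eq_neg_iff_add_eq_0)
  have "range of_nat \<subseteq> {x. poly f x = 0}"
    using roots of_nat_power_CHAR[OF assms] by blast
  moreover have "card {x. poly f x = 0} \<le> card (range (of_nat :: nat \<Rightarrow> 'a))"
    using card_poly_roots_bound[OF \<open>f \<noteq> 0\<close>] deg card_range_of_nat_CHAR[where 'a='a]
      prime_gt_0_nat[OF assms]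
    by simp
  ultimately have "range of_nat = {x. poly f x = 0}"
    using poly_roots_finite[OF \<open>f \<noteq> 0\<close>] by (simp add: card_seteq)
  then show "c ^ CHAR('a) = c \<Longrightarrow> c \<in> range of_nat"
    using roots by blast
qed (use of_nat_power_CHAR[OF assms] in auto)

lemma prime_three: "prime (3::nat)"
proof -
  have "{2..<3::nat} = {2}"
    by auto
  then show ?thesis
    by (simp add: prime_nat_iff')
qed

lemma of_nat_card_UNIV_eq_0: "of_nat (card (UNIV :: 'a::{ring_1,finite} set)) = (0 :: 'a)"
proof -
  have "(\<Sum>y\<in>UNIV. 1 + y) = (\<Sum>y\<in>UNIV. y :: 'a)"
    by (rule sum.reindex_bij_witness[of _ "\<lambda>y. y - 1" "\<lambda>y. 1 + y"]) auto
  then show ?thesis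
    by (simp add: sum.distrib)
qed

lemma CHAR_eq_of_card_eq_prime_power:
  assumes "card (UNIV :: 'a::{field,finite} set) = p ^ m" "prime p"
  shows "CHAR('a) = p"
proof -
  have "prime CHAR('a)"
    by (rule prime_CHAR_semidom[OF finite_imp_CHAR_pos]) simp
  moreover have "CHAR('a) dvd p ^ m"
    using of_nat_card_UNIV_eq_0[where 'a='a] unfolding assms(1) of_nat_eq_0_iff_char_dvd .
  ultimately show ?thesis
    using assms(2) by (blast intro: primes_dvd_imp_eq prime_dvd_power)
qed

definition frobenius_poly :: "'a::comm_semiring_1 poly \<Rightarrow> 'a poly" where
  "frobenius_poly p = map_poly (\<lambda>c. c ^ CHAR('a)) p"

lemma coeff_frobenius_poly:
  assumes "CHAR('a::comm_semiring_1) > 0"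
  shows "coeff (frobenius_poly p) i = (coeff p i :: 'a) ^ CHAR('a)"
  using assms by (simp add: frobenius_poly_def coeff_map_poly power_0_left)

lemma frobenius_poly_mult:
  fixes p q :: "'a::comm_semiring_1 poly"
  assumes "prime CHAR('a)"
  shows "frobenius_poly (p * q) = frobenius_poly p * frobenius_poly q"
  using assms
  by (intro poly_eqI) (simp add: coeff_frobenius_poly prime_gt_0_nat coeff_mult
      freshmans_dream_sum power_mult_distrib)

lemma frobenius_poly_prod:
  fixes f :: "'b \<Rightarrow> 'a::comm_semiring_1 poly"
  assumes "prime CHAR('a)"
  shows "frobenius_poly (\<Prod>i\<in>A. f i) = (\<Prod>i\<in>A. frobenius_poly (f i))"
proof (induction A rule: infinite_finite_induct)
  case (insert x F)
  then show ?case by (simp add: frobenius_poly_mult[OF assms])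
qed (simp_all add: frobenius_poly_def)

lemma frobenius_poly_linear:
  assumes "prime CHAR('a::comm_ring_1)"
  shows "frobenius_poly [:-a, 1:] = [:-(a ^ CHAR('a)), 1 :: 'a:]"
  using assms
  by (simp add: frobenius_poly_def map_poly_pCons prime_gt_0_nat power_0_left minus_power_prime_CHAR)

lemma prime_subfield_poly_iff_frobenius_poly:
  fixes p :: "'a::field poly"
  assumes "prime CHAR('a)"
  shows "prime_subfield_poly p \<longleftrightarrow> frobenius_poly p = p"
  using assms
  by (auto simp: prime_subfield_poly_def poly_eq_iff coeff_frobenius_poly prime_gt_0_nat
      power_CHAR_eq_self_iff)

lemma prime_subfield_poly_mult:
  fixes p q :: "'a::field poly"
  assumes "prime CHAR('a)" "prime_subfield_poly p" "prime_subfield_poly q"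
  shows "prime_subfield_poly (p * q)"
  using assms by (simp add: prime_subfield_poly_iff_frobenius_poly frobenius_poly_mult)

lemma prime_subfield_poly_mult_cancel_left:
  fixes g r :: "'a::field poly"
  assumes "prime CHAR('a)" "prime_subfield_poly (g * r)" "prime_subfield_poly g" "g \<noteq> 0"
  shows "prime_subfield_poly r"
proof -
  have "g * frobenius_poly r = g * r"
    using assms by (metis frobenius_poly_mult prime_subfield_poly_iff_frobenius_poly)
  then show ?thesis
    using assms by (simp add: prime_subfield_poly_iff_frobenius_poly)
qed

lemma zero_or_degree_less_iff:
  "(p = 0 \<or> degree p < k) \<longleftrightarrow> (\<forall>i\<ge>k. coeff p i = 0)"
proof
  assume high: "\<forall>i\<ge>k. coeff p i = 0"
  show "p = 0 \<or> degree p < k"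
  proof (cases "p = 0")
    case False
    then have "coeff p (degree p) \<noteq> 0"
      by (rule leading_coeff_neq_0)
    then show ?thesis
      using high not_le by blast
  qed simp
qed (auto intro: coeff_eq_0)

lemma card_prime_subfield_polys_degree_less:
  assumes "CHAR('a::field) > 0"
  shows "card {r :: 'a poly. prime_subfield_poly r \<and> (r = 0 \<or> degree r < k)} = CHAR('a) ^ k"
proof -
  let ?K = "range (of_nat :: nat \<Rightarrow> 'a)"
  let ?L = "{xs. set xs \<subseteq> ?K \<and> length xs = k}"
  have "{r. prime_subfield_poly r \<and> (r = 0 \<or> degree r < k)} = Poly ` ?L"
  proof (intro equalityI subsetI)
    fix r :: "'a poly"
    assume "r \<in> {r. prime_subfield_poly r \<and> (r = 0 \<or> degree r < k)}"
    then have "r = Poly (map (coeff r) [0..<k])" "map (coeff r) [0..<k] \<in> ?L"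
      by (auto intro!: poly_eqI simp: nth_default_def zero_or_degree_less_iff prime_subfield_poly_def)
    then show "r \<in> Poly ` ?L"
      by blast
  next
    fix r :: "'a poly"
    assume "r \<in> Poly ` ?L"
    then obtain xs where "r = Poly xs" "xs \<in> ?L"
      by blast
    then show "r \<in> {r. prime_subfield_poly r \<and> (r = 0 \<or> degree r < k)}"
      by (auto simp: zero_or_degree_less_iff prime_subfield_poly_def nth_default_def subset_iff
          intro: range_eqI[of _ _ 0])
  qed
  moreover have "inj_on Poly ?L"
  proof (rule inj_onI)
    fix xs ys
    assume "xs \<in> ?L" "ys \<in> ?L" "Poly xs = Poly ys"
    then show "xs = ys"
      by (metis (mono_tags, lifting) coeff_Poly_eq mem_Collect_eq nth_default_nth nth_equalityI)
  qed
  moreover have "finite ?K"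
    using card_range_of_nat_CHAR[OF assms] assms by (intro card_ge_0_finite) simp
  ultimately show ?thesis
    using card_range_of_nat_CHAR[OF assms] by (simp add: card_image card_lists_length_eq)
qed

lemma degree_monom_minus_one:
  "n \<ge> 1 \<Longrightarrow> degree (monom (1::'a::idom) n - 1) = n"
  using degree_add_eq_left[of "-1" "monom 1 n"] by (simp add: degree_monom_eq)

lemma monom_minus_one_nonzero:
  assumes "n \<ge> 1"
  shows "monom (1::'a::idom) n - 1 \<noteq> 0"
proof
  assume "monom (1::'a) n - 1 = 0"
  then have "degree (monom (1::'a) n - 1) = 0"
    by (simp only: degree_0)
  then show False
    using degree_monom_minus_one[OF assms, where 'a='a] assms by simp
qed

lemma cyclic_code_zero_or_degree_less:
  assumes "c \<in> cyclic_code n (g :: 'a::field poly)" "n \<ge> 1"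
  shows "c = 0 \<or> degree c < n"
proof -
  obtain q where "c = (q * g) mod (monom 1 n - 1)"
    using assms(1) unfolding cyclic_code_def by blast
  then show ?thesis
    using degree_mod_less[OF monom_minus_one_nonzero[OF assms(2)], of "q * g"]
    unfolding degree_monom_minus_one[OF assms(2)] by simp
qed

lemma cyclic_code_memE:
  fixes g :: "'a::field poly"
  assumes "prime CHAR('a)" "prime_subfield_poly g" "g dvd monom 1 n - 1" "n \<ge> 1"
    and "c \<in> cyclic_code n g"
  obtains r where "c = g * r" "prime_subfield_poly r"
proof -
  obtain q where "prime_subfield_poly c" "c = (q * g) mod (monom 1 n - 1)"
    using assms(5) unfolding cyclic_code_def by blast
  moreover from this have "g dvd c"
    using assms(3) by (simp add: dvd_mod)
  moreover have "g \<noteq> 0"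
    using assms(3) monom_minus_one_nonzero[OF assms(4)] by auto
  ultimately show ?thesis
    using that prime_subfield_poly_mult_cancel_left[OF assms(1) _ assms(2)] by (auto elim!: dvdE)
qed

lemma multiple_mem_cyclic_code:
  fixes g r :: "'a::field poly"
  assumes "prime CHAR('a)" "prime_subfield_poly g" "prime_subfield_poly r"
    and "g * r = 0 \<or> degree (g * r) < n" "n \<ge> 1"
  shows "g * r \<in> cyclic_code n g"
proof -
  have "(g * r) mod (monom 1 n - 1) = g * r"
    using assms(4) mod_poly_less[of "g * r" "monom 1 n - 1"]
    unfolding degree_monom_minus_one[OF assms(5)] by auto
  then have "(r * g) mod (monom 1 n - 1) = g * r"
    by (simp add: mult.commute)
  then show ?thesis
    using prime_subfield_poly_mult[OF assms(1-3)] assms(3) unfolding cyclic_code_def by auto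
qed

lemma cyclic_code_eq_multiples:
  fixes g :: "'a::field poly"
  assumes "prime CHAR('a)" "prime_subfield_poly g" "g dvd monom 1 n - 1" "n \<ge> 1"
  shows "cyclic_code n g =
    (\<lambda>r. g * r) ` {r. prime_subfield_poly r \<and> (r = 0 \<or> degree r < n - degree g)}"
proof -
  have "g \<noteq> 0"
    using assms(3) monom_minus_one_nonzero[OF assms(4)] by auto
  then have degree_iff: "g * r = 0 \<or> degree (g * r) < n \<longleftrightarrow> r = 0 \<or> degree r < n - degree g"
    for r :: "'a poly"
    by (cases "r = 0") (auto simp: degree_mult_eq)
  show ?thesis
  proof (intro equalityI subsetI)
    fix c
    assume c: "c \<in> cyclic_code n g"
    then obtain r where "c = g * r" "prime_subfield_poly r"
      using assms by (blast elim: cyclic_code_memE)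
    then show "c \<in> (\<lambda>r. g * r) ` {r. prime_subfield_poly r \<and> (r = 0 \<or> degree r < n - degree g)}"
      using cyclic_code_zero_or_degree_less[OF c assms(4)] degree_iff by blast
  qed (use multiple_mem_cyclic_code[OF assms(1,2) _ _ assms(4)] degree_iff in auto)
qed

lemma card_cyclic_code:
  fixes g :: "'a::field poly"
  assumes "prime CHAR('a)" "prime_subfield_poly g" "g dvd monom 1 n - 1" "n \<ge> 1"
  shows "card (cyclic_code n g) = CHAR('a) ^ (n - degree g)"
proof -
  have "g \<noteq> 0"
    using assms(3) monom_minus_one_nonzero[OF assms(4)] by auto
  then have "inj_on (\<lambda>r. g * r) A" for A
    by (simp add: inj_on_def)
  then show ?thesis
    unfolding cyclic_code_eq_multiples[OF assms] card_image[OF \<open>inj_on _ _\<close>]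
    using card_prime_subfield_polys_degree_less prime_gt_0_nat[OF assms(1)] by blast
qed

lemma ternary_code_params_cyclic_code:
  fixes g :: "'a::field poly"
  assumes "CHAR('a) = 3" "prime_subfield_poly g" "g dvd monom 1 n - 1" "n \<ge> 1"
  shows "ternary_code_params (cyclic_code n g) n (n - degree g)"
proof -
  have "prime CHAR('a)"
    unfolding assms(1) by (rule prime_three)
  note card = card_cyclic_code[OF this assms(2-4)]
  have "c = 0 \<or> degree c < n" if "c \<in> cyclic_code n g" for c
    using that assms(4) by (rule cyclic_code_zero_or_degree_less)
  moreover have "finite (cyclic_code n g)"
    using card assms(1) by (intro card_ge_0_finite) simp
  ultimately show ?thesis
    using card assms(1) unfolding ternary_code_params_def by simp
qed

lemma power_card_minus_one_eq_1:
  fixes x :: "'a::{field,finite}"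
  assumes "x \<noteq> 0"
  shows "x ^ (card (UNIV :: 'a set) - 1) = 1"
proof -
  let ?U = "UNIV - {0 :: 'a}"
  have "(\<Prod>y\<in>?U. x * y) = (\<Prod>y\<in>?U. y)"
    by (rule prod.reindex_bij_witness[of _ "\<lambda>y. y / x" "\<lambda>y. x * y"]) (use assms in auto)
  then have "x ^ card ?U * \<Prod>?U = 1 * \<Prod>?U"
    by (simp add: prod.distrib)
  moreover have "\<Prod>?U \<noteq> 0"
    by simp
  ultimately have "x ^ card ?U = 1"
    by (metis mult_cancel_right)
  then show ?thesis
    by (simp add: card_Diff_singleton)
qed

lemma primitive_element_powers:
  fixes \<alpha> :: "'a::{field,finite}"
  assumes "primitive_element \<alpha>" "\<alpha> \<noteq> 0"
  defines "N \<equiv> card (UNIV :: 'a set) - 1"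
  shows "\<alpha> ^ N = 1" and "inj_on (\<lambda>j. \<alpha> ^ j) {..<N}"
proof -
  show "\<alpha> ^ N = 1"
    unfolding N_def using assms(2) by (rule power_card_minus_one_eq_1)
  have "N > 0"
    using card_mono[of UNIV "{0, 1 :: 'a}"] unfolding N_def by simp
  have "x \<in> (\<lambda>j. \<alpha> ^ j) ` {..<N}" if "x \<noteq> 0" for x
  proof -
    obtain j where "x = \<alpha> ^ j"
      using assms(1) \<open>x \<noteq> 0\<close> unfolding primitive_element_def by blast
    also have "\<dots> = (\<alpha> ^ N) ^ (j div N) * \<alpha> ^ (j mod N)"
      by (simp flip: power_mult power_add)
    finally have "x = \<alpha> ^ (j mod N)"
      using \<open>\<alpha> ^ N = 1\<close> by simp
    then show ?thesis
      using \<open>N > 0\<close> by simp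
  qed
  then have "(\<lambda>j. \<alpha> ^ j) ` {..<N} = UNIV - {0}"
    using assms(2) by auto
  moreover have "card (UNIV - {0 :: 'a}) = N"
    unfolding N_def by (simp add: card_Diff_singleton)
  ultimately show "inj_on (\<lambda>j. \<alpha> ^ j) {..<N}"
    by (intro eq_card_imp_inj_on) simp_all
qed

lemma primitive_element_nonzero:
  fixes \<alpha> :: "'a::{field,finite}"
  assumes "primitive_element \<alpha>" "card (UNIV :: 'a set) > 2"
  shows "\<alpha> \<noteq> 0"
proof
  assume "\<alpha> = 0"
  then have "UNIV \<subseteq> {0, 1 :: 'a}"
    using assms(1) unfolding primitive_element_def by (metis insertCI power_0_left subsetI)
  then have "card (UNIV :: 'a set) \<le> 2"
    using card_mono[of "{0, 1 :: 'a}" UNIV] by simp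
  then show False
    using assms(2) by simp
qed

lemma w3_0 [simp]: "w3 k 0 = 0"
  by (simp add: w3_def)

lemma w3_Suc_low: "w3 (Suc k) x = x mod 3 + w3 k (x div 3)"
  unfolding w3_def by (simp add: sum.lessThan_Suc_shift div_mult2_eq del: sum.lessThan_Suc)

lemma digit_mod_power:
  assumes "t < k"
  shows "(x mod 3 ^ k) div 3 ^ t mod 3 = (x::nat) div 3 ^ t mod 3"
proof -
  obtain d where d: "k = t + Suc d"
    using assms less_iff_Suc_add by auto
  have "x mod 3 ^ k = 3 ^ t * (x div 3 ^ t mod 3 ^ Suc d) + x mod 3 ^ t"
    unfolding d power_add by (rule mod_mult2_eq)
  then show ?thesis
    by (simp add: mod_mod_cancel)
qed

lemma w3_Suc_high: "w3 (Suc k) x = w3 k (x mod 3 ^ k) + x div 3 ^ k mod 3"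
  unfolding w3_def by (simp add: digit_mod_power)

lemma w3_max: "w3 k (3 ^ k - 1) = 2 * k"
proof (induction k)
  case (Suc k)
  define q :: nat where "q = 3 ^ k - 1"
  have "(3::nat) ^ Suc k - 1 = 2 + 3 * q"
    using one_le_power[of "3::nat" k] unfolding q_def by (simp only: power_Suc) linarith
  moreover have "(2 + 3 * q) mod 3 = 2" "(2 + 3 * q) div 3 = q"
    by presburger+
  ultimately have "w3 (Suc k) (3 ^ Suc k - 1) = 2 + w3 k q"
    by (simp only: w3_Suc_low)
  then show ?case
    using Suc unfolding q_def by simp
qed (simp add: w3_def)

text \<open>
  Moves the leading digit of a (k+1)-digit base-3 number to the units place; for
  0 < j < 3^(k+1) - 1 this is 3 j mod (3^(k+1) - 1).
\<close>

definition rotate_digits :: "nat \<Rightarrow> nat \<Rightarrow> nat" where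
  "rotate_digits k j = j div 3 ^ k + 3 * (j mod 3 ^ k)"

lemma rotate_digits_props:
  assumes "j < 3 ^ Suc k"
  shows w3_rotate_digits: "w3 (Suc k) (rotate_digits k j) = w3 (Suc k) j"
    and three_mult_eq_rotate_digits: "3 * j = (3 ^ Suc k - 1) * (j div 3 ^ k) + rotate_digits k j"
    and rotate_digits_bounds:
      "1 \<le> j \<Longrightarrow> j \<le> 3 ^ Suc k - 2 \<Longrightarrow> 1 \<le> rotate_digits k j \<and> rotate_digits k j \<le> 3 ^ Suc k - 2"
proof -
  define P :: nat where "P = 3 ^ k"
  define a where "a = j div P"
  define b where "b = j mod P"
  have "P \<ge> 1" "b < P" "j = P * a + b" "rotate_digits k j = a + 3 * b"
    unfolding a_def b_def P_def rotate_digits_def by simp_all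
  have "a < 3"
    using assms unfolding a_def P_def by (simp add: less_mult_imp_div_less mult.commute)
  have "w3 (Suc k) (a + 3 * b) = a + w3 k b"
    using \<open>a < 3\<close> by (simp add: w3_Suc_low)
  moreover have "w3 (Suc k) j = w3 k b + a"
    using \<open>a < 3\<close> by (simp add: w3_Suc_high a_def b_def P_def)
  ultimately show "w3 (Suc k) (rotate_digits k j) = w3 (Suc k) j"
    using \<open>rotate_digits k j = a + 3 * b\<close> by simp
  have "(3::nat) ^ Suc k = 3 * P"
    unfolding P_def by simp
  moreover have "(3 * P - 1) * a = 3 * P * a - a" "a \<le> 3 * P * a"
    using \<open>P \<ge> 1\<close> by (simp_all add: diff_mult_distrib)
  ultimately show "3 * j = (3 ^ Suc k - 1) * (j div 3 ^ k) + rotate_digits k j"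
    using \<open>j = P * a + b\<close> \<open>rotate_digits k j = a + 3 * b\<close>
    unfolding a_def[symmetric] P_def[symmetric] by simp
  show "1 \<le> rotate_digits k j \<and> rotate_digits k j \<le> 3 ^ Suc k - 2"
    if "1 \<le> j" "j \<le> 3 ^ Suc k - 2"
    using that \<open>a < 3\<close> \<open>b < P\<close> \<open>j = P * a + b\<close> \<open>rotate_digits k j = a + 3 * b\<close>
      \<open>3 ^ Suc k = 3 * P\<close>
    by (auto simp: less_Suc_eq numeral_3_eq_3)
qed

lemma inj_on_rotate_digits: "inj_on (rotate_digits k) {..<3 ^ Suc k}"
proof (rule inj_onI)
  fix x y
  assume "x \<in> {..<3 ^ Suc k}" "y \<in> {..<3 ^ Suc k}" and eq: "rotate_digits k x = rotate_digits k y"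
  then have "x div 3 ^ k < 3" "y div 3 ^ k < 3"
    by (simp_all add: less_mult_imp_div_less mult.commute)
  then have "rotate_digits k x mod 3 = x div 3 ^ k" "rotate_digits k y mod 3 = y div 3 ^ k"
    unfolding rotate_digits_def by simp_all
  then have "x div 3 ^ k = y div 3 ^ k"
    using eq by simp
  moreover from this have "x mod 3 ^ k = y mod 3 ^ k"
    using eq unfolding rotate_digits_def by simp
  ultimately show "x = y"
    by (metis div_mult_mod_eq)
qed

lemma T_set_subset: "T_set i1 i2 m \<subseteq> {1..3 ^ m - 2}"
  unfolding T_set_def by (auto simp: diff_diff_left)

lemma finite_T_set [simp]: "finite (T_set i1 i2 m)"
  by (rule finite_subset[OF T_set_subset]) simp

lemma T_set_less:
  assumes "j \<in> T_set i1 i2 m"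
  shows "j < 3 ^ m"
proof -
  have "j \<le> 3 ^ m - 2"
    using subsetD[OF T_set_subset assms] by simp
  then show ?thesis
    using one_le_power[of "3::nat" m] by linarith
qed

lemma inj_on_rotate_digits_T_set: "inj_on (rotate_digits k) (T_set i1 i2 (Suc k))"
  using inj_on_rotate_digits by (rule inj_on_subset) (auto dest: T_set_less)

lemma rotate_digits_T_set: "rotate_digits k ` T_set i1 i2 (Suc k) = T_set i1 i2 (Suc k)"
proof (rule endo_inj_surj)
  show "rotate_digits k ` T_set i1 i2 (Suc k) \<subseteq> T_set i1 i2 (Suc k)"
  proof
    fix x
    assume "x \<in> rotate_digits k ` T_set i1 i2 (Suc k)"
    then obtain j where j: "j \<in> T_set i1 i2 (Suc k)" and x: "x = rotate_digits k j"
      by blast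
    have "j < 3 ^ Suc k" "1 \<le> j" "j \<le> 3 ^ Suc k - 2"
      using T_set_less[OF j] subsetD[OF T_set_subset j] by simp_all
    then show "x \<in> T_set i1 i2 (Suc k)"
      using j rotate_digits_props[of j k] unfolding x T_set_def by (auto simp: diff_diff_left)
  qed
qed (simp_all add: inj_on_rotate_digits_T_set)

lemma degree_gen_poly: "degree (gen_poly \<alpha> i1 i2 m) = card (T_set i1 i2 m)"
  unfolding gen_poly_def by (subst degree_prod_eq_sum_degree) auto

lemma prod_linear_factors_dvd:
  fixes f :: "'b \<Rightarrow> 'a::idom"
  assumes "finite A" "inj_on f A" "\<And>a. a \<in> A \<Longrightarrow> poly p (f a) = 0"
  shows "(\<Prod>a\<in>A. [:-f a, 1:]) dvd p"
  using assms
proof (induction A rule: finite_induct)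
  case (insert x F)
  then obtain r where r: "p = (\<Prod>a\<in>F. [:-f a, 1:]) * r"
    by (auto elim: dvdE)
  have "poly (\<Prod>a\<in>F. [:-f a, 1:]) (f x) \<noteq> 0"
    using insert.hyps insert.prems(1) by (auto simp: poly_prod inj_on_def)
  then have "poly r (f x) = 0"
    using insert.prems(2) r by (metis insertI1 mult_eq_0_iff poly_mult)
  then have "[:-f x, 1:] dvd r"
    by (simp add: poly_eq_0_iff_dvd)
  then have "[:-f x, 1:] * (\<Prod>a\<in>F. [:-f a, 1:]) dvd r * (\<Prod>a\<in>F. [:-f a, 1:])"
    by (rule mult_dvd_mono) simp
  then show ?case
    unfolding prod.insert[OF insert.hyps] r by (simp only: mult.commute)
qed simp

lemma gen_poly_dvd:
  fixes \<alpha> :: "'a::field"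
  assumes "\<alpha> ^ (3 ^ m - 1) = 1" "inj_on (\<lambda>j. \<alpha> ^ j) {..<3 ^ m - 1}"
  shows "gen_poly \<alpha> i1 i2 m dvd monom 1 (3 ^ m - 1) - 1"
  unfolding gen_poly_def
proof (rule prod_linear_factors_dvd)
  have "T_set i1 i2 m \<subseteq> {..<3 ^ m - 1}"
    using T_set_subset by fastforce
  then show "inj_on (\<lambda>j. \<alpha> ^ j) (T_set i1 i2 m)"
    using assms(2) by (rule inj_on_subset[rotated])
  show "poly (monom 1 (3 ^ m - 1) - 1) (\<alpha> ^ j) = 0" for j
  proof -
    have "(\<alpha> ^ j) ^ (3 ^ m - 1) = (\<alpha> ^ (3 ^ m - 1)) ^ j"
      by (simp only: power_mult[symmetric] mult.commute)
    then show ?thesis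
      using assms(1) by (simp add: poly_monom)
  qed
qed simp

lemma prime_subfield_poly_gen_poly:
  fixes \<alpha> :: "'a::field"
  assumes "CHAR('a) = 3" "\<alpha> ^ (3 ^ m - 1) = 1" "m \<ge> 1"
  shows "prime_subfield_poly (gen_poly \<alpha> i1 i2 m)"
proof -
  obtain k where m: "m = Suc k"
    using assms(3) by (cases m) auto
  have "prime CHAR('a)"
    unfolding assms(1) by (rule prime_three)
  let ?T = "T_set i1 i2 m"
  have "(\<alpha> ^ j) ^ 3 = \<alpha> ^ rotate_digits k j" if "j \<in> ?T" for j
  proof -
    have "(\<alpha> ^ j) ^ 3 = (\<alpha> ^ (3 ^ Suc k - 1)) ^ (j div 3 ^ k) * \<alpha> ^ rotate_digits k j"
      using three_mult_eq_rotate_digits[OF T_set_less[OF that[unfolded m]]]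
      by (simp add: power_add mult.commute flip: power_mult)
    then show ?thesis
      using assms(2) m by simp
  qed
  then have "frobenius_poly (gen_poly \<alpha> i1 i2 m) = (\<Prod>j\<in>?T. [:-(\<alpha> ^ rotate_digits k j), 1:])"
    unfolding gen_poly_def frobenius_poly_prod[OF \<open>prime CHAR('a)\<close>]
      frobenius_poly_linear[OF \<open>prime CHAR('a)\<close>] assms(1)
    by (intro prod.cong) simp_all
  also have "\<dots> = gen_poly \<alpha> i1 i2 m"
    unfolding gen_poly_def m
    by (rule prod.reindex_bij_betw) (simp add: bij_betw_def rotate_digits_T_set inj_on_rotate_digits_T_set)
  finally show ?thesis
    using prime_subfield_poly_iff_frobenius_poly[OF \<open>prime CHAR('a)\<close>] by simp
qed

lemma ternary_code_params_gen_poly: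
  fixes \<alpha> :: "'a::{field,finite}"
  assumes "card (UNIV :: 'a set) = 3 ^ m" "primitive_element \<alpha>" "m \<ge> 1"
  shows "ternary_code_params (cyclic_code (3 ^ m - 1) (gen_poly \<alpha> i1 i2 m))
           (3 ^ m - 1) (3 ^ m - 1 - card (T_set i1 i2 m))"
proof -
  have char: "CHAR('a) = 3"
    using assms(1) prime_three by (rule CHAR_eq_of_card_eq_prime_power)
  have "(3::nat) ^ m \<ge> 3"
    using power_increasing[OF assms(3), of "3::nat"] by simp
  then have "\<alpha> \<noteq> 0"
    using primitive_element_nonzero[OF assms(2)] assms(1) by simp
  note powers = primitive_element_powers[OF assms(2) this, unfolded assms(1)]
  show ?thesis
    using ternary_code_params_cyclic_code[OF char prime_subfield_poly_gen_poly[OF char powers(1) assms(3)]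
        gen_poly_dvd[OF powers]] \<open>3 ^ m \<ge> 3\<close>
    by (simp add: degree_gen_poly)
qed

definition weight_count :: "nat \<Rightarrow> nat \<Rightarrow> nat" where
  "weight_count m r = card {j. j < 3 ^ m \<and> w3 m j mod 4 = r}"

lemma card_Collect_less_eq_sum: "card {j. j < (N::nat) \<and> P j} = (\<Sum>j<N. if P j then 1 else 0)"
  by (simp add: sum.If_cases Collect_conj_eq lessThan_def Int_commute)

lemma sum_less_three_mult:
  "(\<Sum>j<3 * N. f j) = (\<Sum>j<N. f (3 * j) + f (3 * j + 1) + f (3 * j + 2))"
  for f :: "nat \<Rightarrow> 'a::comm_monoid_add"
proof (induction N)
  case (Suc N)
  have "3 * Suc N = Suc (Suc (Suc (3 * N)))"
    by simp
  then have "(\<Sum>j<3 * Suc N. f j) = (\<Sum>j<3 * N. f j) + f (3 * N) + f (3 * N + 1) + f (3 * N + 2)"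
    by (simp only:) simp
  then show ?case
    using Suc by (simp add: add_ac)
qed simp

lemma add_mod_4_eq_iff:
  fixes d r w :: nat
  assumes "d < 4" "r < 4"
  shows "(d + w) mod 4 = r \<longleftrightarrow> w mod 4 = (r + 4 - d) mod 4"
proof
  assume "(d + w) mod 4 = r"
  then have "(r + (4 - d)) mod 4 = (d + w + (4 - d)) mod 4"
    by (metis mod_add_left_eq)
  then show "w mod 4 = (r + 4 - d) mod 4"
    using assms by simp
next
  assume "w mod 4 = (r + 4 - d) mod 4"
  then have "(d + w) mod 4 = (d + (r + 4 - d)) mod 4"
    by (metis mod_add_right_eq)
  then show "(d + w) mod 4 = r"
    using assms by simp
qed

lemma weight_count_Suc:
  assumes "r < 4"
  shows "weight_count (Suc m) r =
    weight_count m r + weight_count m ((r + 3) mod 4) + weight_count m ((r + 2) mod 4)"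
proof -
  have digit: "w3 (Suc m) (3 * j + d) mod 4 = r \<longleftrightarrow> w3 m j mod 4 = (r + 4 - d) mod 4"
    if "d < 3" for j d
  proof -
    have "w3 (Suc m) (3 * j + d) = d + w3 m j"
      using that by (simp add: w3_Suc_low)
    then show ?thesis
      using that assms add_mod_4_eq_iff[of d r "w3 m j"] by simp
  qed
  have "weight_count (Suc m) r = (\<Sum>j<3 * 3 ^ m. if w3 (Suc m) j mod 4 = r then 1 else 0)"
    unfolding weight_count_def card_Collect_less_eq_sum by simp
  also have "\<dots> = (\<Sum>j<3 ^ m. (if w3 m j mod 4 = r then 1 else 0)
      + (if w3 m j mod 4 = (r + 3) mod 4 then 1 else 0)
      + (if w3 m j mod 4 = (r + 2) mod 4 then 1 else 0))"
    unfolding sum_less_three_mult using digit[of 0] digit[of 1] digit[of 2] assms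
    by (simp add: add.commute)
  also have "\<dots> = weight_count m r + weight_count m ((r + 3) mod 4) + weight_count m ((r + 2) mod 4)"
    unfolding weight_count_def card_Collect_less_eq_sum by (simp add: sum.distrib)
  finally show ?thesis .
qed

text \<open>
  The term (-1)^r + 2 Re(i^(m-r)) of the character sum, with d = (m - r) mod 4.
\<close>

definition weight_count_offset :: "nat \<Rightarrow> nat \<Rightarrow> int" where
  "weight_count_offset m r = (let d = (m mod 4 + 4 - r) mod 4 in
     (-1) ^ r + (if d = 0 then 2 else if d = 2 then -2 else 0))"

lemma weight_count_offset_Suc:
  assumes "r < 4"
  shows "weight_count_offset (Suc m) r = weight_count_offset m r
    + weight_count_offset m ((r + 3) mod 4) + weight_count_offset m ((r + 2) mod 4)"
proof -
  have r: "r = 0 \<or> r = 1 \<or> r = 2 \<or> r = 3"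
    using assms by auto
  have "m mod 4 = 0 \<or> m mod 4 = 1 \<or> m mod 4 = 2 \<or> m mod 4 = 3"
    by presburger
  then consider "m mod 4 = 0" "Suc m mod 4 = 1" | "m mod 4 = 1" "Suc m mod 4 = 2"
    | "m mod 4 = 2" "Suc m mod 4 = 3" | "m mod 4 = 3" "Suc m mod 4 = 0"
    by (auto simp: mod_Suc)
  then show ?thesis
    by cases (use r in \<open>auto simp: weight_count_offset_def\<close>)
qed

lemma weight_count_eq:
  assumes "r < 4"
  shows "4 * int (weight_count m r) = 3 ^ m + weight_count_offset m r"
  using assms
proof (induction m arbitrary: r)
  case 0
  have "weight_count 0 r = (if r = 0 then 1 else 0)"
    unfolding weight_count_def by (auto simp: w3_def)
  moreover have "r = 0 \<or> r = 1 \<or> r = 2 \<or> r = 3"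
    using 0 by auto
  ultimately show ?case
    by (auto simp: weight_count_offset_def)
next
  case (Suc m)
  then show ?case
    by (simp add: weight_count_Suc weight_count_offset_Suc)
qed

lemma card_T_set:
  assumes "i1 \<noteq> i2" "m \<ge> 1"
  shows "card (T_set i1 i2 m) + of_bool (0 \<in> {i1, i2}) + of_bool ((2 * m) mod 4 \<in> {i1, i2})
    = weight_count m i1 + weight_count m i2"
proof -
  define N :: nat where "N = 3 ^ m - 1"
  define A where "A = {j. j < 3 ^ m \<and> (w3 m j mod 4 = i1 \<or> w3 m j mod 4 = i2)}"
  have "N \<noteq> 0"
    using power_increasing[OF assms(2), of "3::nat"] unfolding N_def by simp
  have "finite A"
    unfolding A_def by simp
  have "A = {j. j < 3 ^ m \<and> w3 m j mod 4 = i1} \<union> {j. j < 3 ^ m \<and> w3 m j mod 4 = i2}"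
    unfolding A_def by auto
  then have card_A: "card A = weight_count m i1 + weight_count m i2"
    unfolding weight_count_def using assms(1) by (simp add: card_Un_disjoint disjoint_iff)
  have T: "T_set i1 i2 m = A - {0, N}"
    unfolding T_set_def A_def N_def by auto
  have "0 \<in> A \<longleftrightarrow> 0 \<in> {i1, i2}" "N \<in> A \<longleftrightarrow> (2 * m) mod 4 \<in> {i1, i2}"
    unfolding A_def N_def using w3_max[of m] by auto
  then have card_Int: "card (A \<inter> {0, N}) = of_bool (0 \<in> {i1, i2}) + of_bool ((2 * m) mod 4 \<in> {i1, i2})"
    using \<open>N \<noteq> 0\<close> by (simp add: Int_insert_right)
  have "card (A - {0, N}) + card (A \<inter> {0, N}) = card A"
    using \<open>finite A\<close> card_Diff_subset_Int[of A "{0, N}"] card_mono[of A "A \<inter> {0, N}"] by simp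
  then show ?thesis
    unfolding T card_A card_Int by simp
qed

lemma code_dimensions_mod_4_eq_3:
  assumes "m mod 4 = 3"
  defines "n \<equiv> 3 ^ m - 1"
  shows "n - card (T_set 0 3 m) = n div 2" "n - card (T_set 1 2 m) = (n + 2) div 2"
    and "n - card (T_set 2 3 m) = n div 2" "n - card (T_set 0 1 m) = (n + 2) div 2"
proof -
  have "m \<ge> 1" "(2 * m) mod 4 = 2"
    using assms(1) by presburger+
  have n: "int n = 3 ^ m - 1"
    unfolding n_def by (simp add: of_nat_diff)
  have wc: "4 * int (weight_count m 0) = 3 ^ m + 1" "4 * int (weight_count m 1) = 3 ^ m - 3"
    "4 * int (weight_count m 2) = 3 ^ m + 1" "4 * int (weight_count m 3) = 3 ^ m + 1"
    using weight_count_eq[of _ m] assms(1) by (simp_all add: weight_count_offset_def)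
  have "card (T_set 0 3 m) + 1 = weight_count m 0 + weight_count m 3"
    "card (T_set 1 2 m) + 1 = weight_count m 1 + weight_count m 2"
    "card (T_set 2 3 m) + 1 = weight_count m 2 + weight_count m 3"
    "card (T_set 0 1 m) + 1 = weight_count m 0 + weight_count m 1"
    using card_T_set[of 0 3 m] card_T_set[of 1 2 m] card_T_set[of 2 3 m] card_T_set[of 0 1 m]
      \<open>m \<ge> 1\<close> \<open>(2 * m) mod 4 = 2\<close> by simp_all
  then have "2 * int (card (T_set 0 3 m)) = int n" "2 * int (card (T_set 1 2 m)) + 2 = int n"
    "2 * int (card (T_set 2 3 m)) = int n" "2 * int (card (T_set 0 1 m)) + 2 = int n"
    using wc unfolding n by linarith+
  then show "n - card (T_set 0 3 m) = n div 2" "n - card (T_set 1 2 m) = (n + 2) div 2"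
    "n - card (T_set 2 3 m) = n div 2" "n - card (T_set 0 1 m) = (n + 2) div 2"
    by linarith+
qed

theorem theorem1:
  fixes \<alpha> :: "'a::{field, finite}" and m :: nat
  assumes "card (UNIV :: 'a set) = 3 ^ m"
    and "primitive_element \<alpha>"
    and "m mod 4 = 3" and "m \<ge> 3"
  defines "n \<equiv> 3 ^ m - 1"
  shows "ternary_code_params (cyclic_code n (gen_poly \<alpha> 0 3 m)) n (n div 2)
       \<and> ternary_code_params (cyclic_code n (gen_poly \<alpha> 1 2 m)) n ((n + 2) div 2)
       \<and> ternary_code_params (cyclic_code n (gen_poly \<alpha> 2 3 m)) n (n div 2)
       \<and> ternary_code_params (cyclic_code n (gen_poly \<alpha> 0 1 m)) n ((n + 2) div 2)"
proof -
  have "m \<ge> 1"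
    using assms(4) by simp
  note params = ternary_code_params_gen_poly[OF assms(1,2) this]
  show ?thesis
    using params[of 0 3] params[of 1 2] params[of 2 3] params[of 0 1]
      code_dimensions_mod_4_eq_3[OF assms(3)]
    unfolding n_def by simp
qed

end
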